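(* Let $k,n$ be integers with $2\le k\le n-2$. Then, as polynomials in $t$, $$i(\mathrm{Sp}_{k,n},t)=i(\mathrm{Sp}_{n-k,n},t)=i(U_{k,n},t)-i(T_{k,n},t-1).$$
   Context: For $S,T\subseteq[n]$, write $T\le S$ if $|T|=|S|$ and the $i$-th smallest element of $T$ is at most the $i$-th smallest element of $S$ for each $i$. The Schubert matroid $\mathrm{SM}_n(S)$ is the matroid on $[n]$ with bases $\{T\subseteq[n]:T\le S\}$. For a matroid $M$ on $[n]$, $i(M,t)$ is the Ehrhart polynomial of its matroid polytope $\mathrm{conv}\{\sum_{b\in B}e_b: B\text{ a basis}\}$ (the polynomial counting lattice points in the $t$-th dilate for positive integers $t$), and $i(M,t-1)$ is this polynomial evaluated at $t-1$. $U_{k,n}=\mathrm{SM}_n(\{n-k+1,\dots,n\})$; $T_{k,n}=\mathrm{SM}_n(\{2,3,\dots,k,n\})$; $\mathrm{Sp}_{k,n}=\mathrm{SM}_n(\{k\}\cup\{k+2,\dots,n\})$. *)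

theory Defs
  imports Complex_Main "HOL-Computational_Algebra.Polynomial"
begin

definition gale_le :: "nat set \<Rightarrow> nat set \<Rightarrow> bool" where
  "gale_le T S \<longleftrightarrow> card T = card S \<and>
     (\<forall>i < card S. sorted_list_of_set T ! i \<le> sorted_list_of_set S ! i)"

text \<open>A matroid on [n] = {1..n} is represented by its set of bases.
Schubert matroid SM_n(S): bases are the T \<subseteq> [n] with T \<le> S.\<close>
definition schubert_bases :: "nat \<Rightarrow> nat set \<Rightarrow> nat set set" where
  "schubert_bases n S = {T. T \<subseteq> {1..n} \<and> gale_le T S}"

text \<open>Lattice points (integer vectors indexed by [n], zero outside [n]) of the
t-th dilate of the polytope conv{ e_B : B \<in> bases }.\<close>
definition dilate_lattice_points :: "nat \<Rightarrow> nat set set \<Rightarrow> nat \<Rightarrow> (nat \<Rightarrow> int) set" where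
  "dilate_lattice_points n bases t =
     {x. (\<forall>i. i \<notin> {1..n} \<longrightarrow> x i = 0) \<and>
         (\<exists>l :: nat set \<Rightarrow> real. (\<forall>B\<in>bases. l B \<ge> 0) \<and> (\<Sum>B\<in>bases. l B) = 1 \<and>
            (\<forall>i\<in>{1..n}. real_of_int (x i) = real t * (\<Sum>B\<in>bases. l B * (if i \<in> B then 1 else 0))))}"

definition ehrhart_poly :: "nat \<Rightarrow> nat set set \<Rightarrow> real poly" where
  "ehrhart_poly n bases = (THE p. \<forall>t::nat. t \<ge> 1 \<longrightarrow>
      poly p (real t) = real (card (dilate_lattice_points n bases t)))"

definition U_bases :: "nat \<Rightarrow> nat \<Rightarrow> nat set set" where
  "U_bases k n = schubert_bases n {n - k + 1..n}"

definition T_bases :: "nat \<Rightarrow> nat \<Rightarrow> nat set set" where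
  "T_bases k n = schubert_bases n ({2..k} \<union> {n})"

definition Sp_bases :: "nat \<Rightarrow> nat \<Rightarrow> nat set set" where
  "Sp_bases k n = schubert_bases n ({k} \<union> {k + 2..n})"

end

theory Submission
  imports Defs
begin

text \<open>Each of \<open>U\<close>, \<open>T\<close> and \<open>Sp\<close> consists of the \<open>r\<close>-subsets \<open>B\<close> of \<open>[n]\<close> with at least \<open>c\<close>
  elements in \<open>[m]\<close>. Peeling off one vertex at a time shows that the lattice points of the
  \<open>t\<close>-th dilate of such a polytope are exactly the integer vectors with entries in \<open>[0, t]\<close>,
  total \<open>r t\<close> and at least \<open>c t\<close> on \<open>[m]\<close>. Splitting them at \<open>m\<close> counts them by convolutions
  of \<open>N(d, t, a)\<close>, the number of compositions of \<open>a\<close> into \<open>d\<close> parts of size at most \<open>t\<close>.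
  By inclusion-exclusion \<open>N(n, t, k t)\<close> is a polynomial in \<open>t\<close>; for \<open>a \<le> t\<close> the bound on the
  parts is void, so \<open>N(d, t, a) = (a + d - 1 choose d - 1)\<close>; and complementing the parts gives
  \<open>N(d, t, a) = N(d, t, d t - a)\<close>. With \<open>g(b) = (b + k - 1 choose k - 1) (b + n - k - 1 choose n - k - 1)\<close>,
  which is symmetric under \<open>k \<mapsto> n - k\<close>, the count for \<open>T\<close> is the sum of \<open>g(b)\<close> over \<open>b \<le> t\<close>,
  and the count for \<open>Sp\<close> is \<open>N(n, t, k t)\<close>, the count for \<open>U\<close>, minus the sum over \<open>b < t\<close>.\<close>

section \<open>Schubert matroids with two blocks\<close>

lemma sorted_list_of_set_nth_le_iff:
  fixes T :: "nat set"
  assumes fin: "finite T" and j: "j < card T"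
  shows "sorted_list_of_set T ! j \<le> v \<longleftrightarrow> j < card {a\<in>T. a \<le> v}"
proof -
  define xs where "xs = sorted_list_of_set T"
  have sorted: "sorted_wrt (<) xs" and set_xs: "set xs = T" and len: "length xs = card T"
    using fin by (auto simp: xs_def)
  have mono: "i \<le> i' \<Longrightarrow> i' < length xs \<Longrightarrow> xs ! i \<le> xs ! i'" for i i'
    using sorted_wrt_nth_less[OF sorted, of i i'] by (cases "i = i'") auto
  have inj: "inj_on ((!) xs) {..<length xs}"
    using fin by (auto simp: xs_def inj_on_def nth_eq_iff_index_eq)
  have fin_le: "finite {a\<in>T. a \<le> v}" using fin by simp
  show ?thesis
  proof
    assume "sorted_list_of_set T ! j \<le> v"
    then have "(!) xs ` {..j} \<subseteq> {a\<in>T. a \<le> v}"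
      using mono j len set_xs unfolding xs_def[symmetric] by force
    moreover have "card ((!) xs ` {..j}) = Suc j"
      using inj j len by (subst card_image) (auto intro: inj_on_subset)
    ultimately have "Suc j \<le> card {a\<in>T. a \<le> v}"
      using card_mono[OF fin_le] by metis
    then show "j < card {a\<in>T. a \<le> v}" by simp
  next
    assume le: "j < card {a\<in>T. a \<le> v}"
    show "sorted_list_of_set T ! j \<le> v"
    proof (rule ccontr)
      assume "\<not> ?thesis"
      then have "v < xs ! j" by (simp add: xs_def)
      then have "{a\<in>T. a \<le> v} \<subseteq> (!) xs ` {..<j}"
        using mono set_xs by (force simp: in_set_conv_nth not_le)
      then have "card {a\<in>T. a \<le> v} \<le> card ((!) xs ` {..<j})"
        by (intro card_mono) auto
      also have "\<dots> \<le> j" using card_image_le[of "{..<j}" "(!) xs"] by simp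
      finally show False using le by simp
    qed
  qed
qed

lemma gale_le_iff_counts:
  assumes "finite B" and "finite S"
  shows "gale_le B S \<longleftrightarrow> card B = card S \<and>
     (\<forall>i<card S. i < card {a\<in>B. a \<le> sorted_list_of_set S ! i})"
  using sorted_list_of_set_nth_le_iff[OF assms(1)] unfolding gale_le_def by auto

lemma card_le_le_add_diff:
  fixes B :: "nat set"
  assumes "finite B" and "v \<le> w"
  shows "card {a\<in>B. a \<le> w} \<le> card {a\<in>B. a \<le> v} + (w - v)"
proof -
  have "card {a\<in>B. a \<le> w} \<le> card ({a\<in>B. a \<le> v} \<union> {v<..w})"
    using assms by (intro card_mono) auto
  also have "\<dots> \<le> card {a\<in>B. a \<le> v} + card {v<..w}" by (rule card_Un_le)
  finally show ?thesis by simp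
qed

definition prefix_bases :: "nat \<Rightarrow> nat \<Rightarrow> nat \<Rightarrow> nat \<Rightarrow> nat set set" where
  "prefix_bases n r m c = {B. B \<subseteq> {1..n} \<and> card B = r \<and> c \<le> card (B \<inter> {1..m})}"

lemma sorted_list_of_set_two_blocks:
  assumes "c \<le> m" and "c \<le> r" and "m + (r - c) \<le> n"
  shows "sorted_list_of_set ({m - c + 1..m} \<union> {n + c + 1 - r..n})
       = [m - c + 1..<m + 1] @ [n + c + 1 - r..<n + 1]"
proof -
  have "sorted_wrt (<) ([m - c + 1..<m + 1] @ [n + c + 1 - r..<n + 1]) \<and>
    set ([m - c + 1..<m + 1] @ [n + c + 1 - r..<n + 1]) = {m - c + 1..m} \<union> {n + c + 1 - r..n} \<and>
    length ([m - c + 1..<m + 1] @ [n + c + 1 - r..<n + 1]) = card ({m - c + 1..m} \<union> {n + c + 1 - r..n})"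
    using assms by (auto simp: sorted_wrt_append card_Un_disjoint)
  then show ?thesis
    using sorted_list_of_set_unique[of "{m - c + 1..m} \<union> {n + c + 1 - r..n}"] by blast
qed

text \<open>The \<open>i\<close>-th element of \<open>{m - c + 1..m} \<union> {n + c + 1 - r..n}\<close> falls short of \<open>m\<close>, resp. \<open>n\<close>,
  by exactly the number of later elements of its block, so only the condition at \<open>i = c - 1\<close> binds.\<close>

lemma two_blocks_gale_counts_iff:
  assumes "c \<le> m" and "c \<le> r" and "m + (r - c) \<le> n" and B: "B \<subseteq> {1..n}" "card B = r"
  shows "(\<forall>i<r. i < card {a\<in>B. a \<le> (if i < c then m - c + 1 + i else n + 1 + i - r)})
     \<longleftrightarrow> c \<le> card (B \<inter> {1..m})"
proof
  have "finite B" using B(1) by (rule finite_subset) simp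
  have prefix: "{a\<in>B. a \<le> m} = B \<inter> {1..m}" and all: "{a\<in>B. a \<le> n} = B" using B by auto
  {
    assume "\<forall>i<r. i < card {a\<in>B. a \<le> (if i < c then m - c + 1 + i else n + 1 + i - r)}"
    then show "c \<le> card (B \<inter> {1..m})"
      using assms(1,2) prefix by (cases c) (auto simp: Suc_le_eq)
  next
    assume c: "c \<le> card (B \<inter> {1..m})"
    show "\<forall>i<r. i < card {a\<in>B. a \<le> (if i < c then m - c + 1 + i else n + 1 + i - r)}"
    proof (intro allI impI)
      fix i assume "i < r"
      show "i < card {a\<in>B. a \<le> (if i < c then m - c + 1 + i else n + 1 + i - r)}"
      proof (cases "i < c")
        case True
        then have "card (B \<inter> {1..m}) \<le> card {a\<in>B. a \<le> m - c + 1 + i} + (c - 1 - i)"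
          using card_le_le_add_diff[OF \<open>finite B\<close>, of "m - c + 1 + i" m] assms(1) prefix by simp
        then show ?thesis using True c by simp
      next
        case False
        then have "card B \<le> card {a\<in>B. a \<le> n + 1 + i - r} + (r - 1 - i)"
          using card_le_le_add_diff[OF \<open>finite B\<close>, of "n + 1 + i - r" n] \<open>i < r\<close> assms(3) all
          by simp
        then show ?thesis using False B(2) \<open>i < r\<close> by simp
      qed
    qed
  }
qed

lemma schubert_bases_two_blocks:
  assumes "c \<le> m" and "c \<le> r" and "m + (r - c) \<le> n"
  shows "schubert_bases n ({m - c + 1..m} \<union> {n + c + 1 - r..n}) = prefix_bases n r m c"
proof -
  define S where "S = {m - c + 1..m} \<union> {n + c + 1 - r..n}"
  have card_S: "card S = r"
    using assms by (simp add: S_def card_Un_disjoint)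
  have nth_S: "sorted_list_of_set S ! i = (if i < c then m - c + 1 + i else n + 1 + i - r)"
    if "i < r" for i
    using assms that unfolding S_def sorted_list_of_set_two_blocks[OF assms]
    by (auto simp: nth_append)
  have "B \<in> schubert_bases n S \<longleftrightarrow> B \<in> prefix_bases n r m c" for B
  proof (cases "B \<subseteq> {1..n} \<and> card B = r")
    case True
    then have "finite B" by (auto intro: finite_subset)
    then show ?thesis
      using True card_S gale_le_iff_counts[of B S] two_blocks_gale_counts_iff[OF assms, of B] nth_S
      by (simp add: schubert_bases_def prefix_bases_def S_def)
  next
    case False
    then show ?thesis
      using card_S by (auto simp: schubert_bases_def prefix_bases_def gale_le_def S_def)
  qed
  then show ?thesis unfolding S_def by blast
qed

lemma U_bases_eq_prefix_bases: "k \<le> n \<Longrightarrow> U_bases k n = prefix_bases n k 0 0"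
  using schubert_bases_two_blocks[of 0 0 k n] by (simp add: U_bases_def Suc_diff_le)

lemma T_bases_eq_prefix_bases:
  "1 \<le> k \<Longrightarrow> k < n \<Longrightarrow> T_bases k n = prefix_bases n k k (k - 1)"
  using schubert_bases_two_blocks[of "k - 1" k k n] by (simp add: T_bases_def numeral_2_eq_2)

lemma Sp_bases_eq_prefix_bases:
  "1 \<le> k \<Longrightarrow> k < n \<Longrightarrow> Sp_bases k n = prefix_bases n (n - k) k 1"
  using schubert_bases_two_blocks[of 1 k "n - k" n] by (simp add: Sp_bases_def)

section \<open>Lattice points of the dilates\<close>

definition prefix_box_points :: "nat \<Rightarrow> nat \<Rightarrow> nat \<Rightarrow> nat \<Rightarrow> nat \<Rightarrow> (nat \<Rightarrow> int) set" where
  "prefix_box_points n r m c t =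
     {x. (\<forall>i. i \<notin> {1..n} \<longrightarrow> x i = 0) \<and> (\<forall>i\<in>{1..n}. 0 \<le> x i \<and> x i \<le> int t) \<and>
         (\<Sum>i\<in>{1..n}. x i) = int (r * t) \<and> int (c * t) \<le> (\<Sum>i\<in>{1..m}. x i)}"

lemma finite_prefix_bases: "finite (prefix_bases n r m c)"
  by (rule finite_subset[of _ "Pow {1..n}"]) (auto simp: prefix_bases_def)

lemma sum_dilate_coordinates:
  fixes l :: "nat set \<Rightarrow> real"
  assumes "finite I" and "finite M"
    and "\<forall>i\<in>I. real_of_int (x i) = real t * (\<Sum>B\<in>M. l B * (if i \<in> B then 1 else 0))"
  shows "real_of_int (\<Sum>i\<in>I. x i) = real t * (\<Sum>B\<in>M. l B * real (card (I \<inter> B)))"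
proof -
  have "real_of_int (\<Sum>i\<in>I. x i) = real t * (\<Sum>B\<in>M. \<Sum>i\<in>I. l B * (if i \<in> B then 1 else 0))"
    using assms(3) by (simp add: sum_distrib_left sum.swap[of _ I])
  also have "(\<Sum>B\<in>M. \<Sum>i\<in>I. l B * (if i \<in> B then 1 else 0)) = (\<Sum>B\<in>M. l B * real (card (I \<inter> B)))"
    using assms(1) by (simp add: sum_distrib_left[symmetric] sum.If_cases Int_def)
  finally show ?thesis .
qed

lemma dilate_lattice_points_subset_prefix_box:
  assumes "m \<le> n"
  shows "dilate_lattice_points n (prefix_bases n r m c) t \<subseteq> prefix_box_points n r m c t"
proof
  fix x assume "x \<in> dilate_lattice_points n (prefix_bases n r m c) t"
  moreover define M where "M = prefix_bases n r m c"
  ultimately obtain l where zero: "\<forall>i. i \<notin> {1..n} \<longrightarrow> x i = 0" and l0: "\<forall>B\<in>M. 0 \<le> l B"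
    and l1: "(\<Sum>B\<in>M. l B) = 1"
    and coord: "\<forall>i\<in>{1..n}. real_of_int (x i) = real t * (\<Sum>B\<in>M. l B * (if i \<in> B then 1 else 0))"
    unfolding dilate_lattice_points_def by blast
  have fin: "finite M" by (simp add: M_def finite_prefix_bases)
  have bounds: "0 \<le> x i \<and> x i \<le> int t" if "i \<in> {1..n}" for i
  proof -
    have "0 \<le> (\<Sum>B\<in>M. l B * (if i \<in> B then 1 else 0))"
      using l0 by (intro sum_nonneg) auto
    moreover have "(\<Sum>B\<in>M. l B * (if i \<in> B then 1 else 0)) \<le> (\<Sum>B\<in>M. l B)"
      using l0 by (intro sum_mono) auto
    ultimately have "0 \<le> real_of_int (x i) \<and> real_of_int (x i) \<le> real t"
      using coord that l1 mult_left_mono[of _ 1 "real t"] by auto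
    then show ?thesis by simp
  qed
  have "(\<Sum>B\<in>M. l B * real (card ({1..n} \<inter> B))) = (\<Sum>B\<in>M. l B * real r)"
    by (rule sum.cong) (auto simp: M_def prefix_bases_def Int_absorb1)
  then have "real_of_int (\<Sum>i\<in>{1..n}. x i) = real t * (\<Sum>B\<in>M. l B * real r)"
    using sum_dilate_coordinates[OF _ fin coord] by simp
  also have "\<dots> = real (r * t)" using l1 by (simp add: sum_distrib_right[symmetric])
  finally have total: "(\<Sum>i\<in>{1..n}. x i) = int (r * t)" by linarith
  have "real (c * t) = real t * (\<Sum>B\<in>M. l B * real c)"
    using l1 by (simp add: sum_distrib_right[symmetric])
  also have "\<dots> \<le> real t * (\<Sum>B\<in>M. l B * real (card ({1..m} \<inter> B)))"
    using l0 by (intro mult_left_mono sum_mono) (auto simp: M_def prefix_bases_def Int_commute)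
  also have "\<dots> = real_of_int (\<Sum>i\<in>{1..m}. x i)"
    using sum_dilate_coordinates[of "{1..m}" M x t l] fin coord assms by simp
  finally have prefix: "int (c * t) \<le> (\<Sum>i\<in>{1..m}. x i)" by linarith
  show "x \<in> prefix_box_points n r m c t"
    unfolding prefix_box_points_def using zero bounds total prefix by blast
qed

lemma zero_in_dilate_lattice_points:
  assumes "finite M" and "M \<noteq> {}"
  shows "(\<lambda>_. 0) \<in> dilate_lattice_points n M 0"
proof -
  obtain B where "B \<in> M" using assms(2) by blast
  then have "(\<Sum>B'\<in>M. if B' = B then 1 else 0 :: real) = 1" using assms(1) by simp
  then show ?thesis
    unfolding dilate_lattice_points_def
    by (intro CollectI conjI exI[of _ "\<lambda>B'. if B' = B then 1 else 0"]) auto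
qed

lemma add_vertex_dilate_lattice_points:
  assumes x: "x \<in> dilate_lattice_points n M s"
    and B: "B \<in> M" "finite M" "B \<subseteq> {1..n}"
  shows "(\<lambda>i. x i + of_bool (i \<in> B)) \<in> dilate_lattice_points n M (Suc s)"
proof -
  obtain l where zero: "\<forall>i. i \<notin> {1..n} \<longrightarrow> x i = 0" and l0: "\<forall>B\<in>M. 0 \<le> l B"
    and l1: "(\<Sum>B\<in>M. l B) = 1"
    and coord: "\<forall>i\<in>{1..n}. real_of_int (x i) = real s * (\<Sum>B\<in>M. l B * (if i \<in> B then 1 else 0))"
    using x unfolding dilate_lattice_points_def by blast
  define l' where "l' = (\<lambda>B'. (real s * l B' + (if B' = B then 1 else 0)) / (real s + 1))"
  have "(\<Sum>B'\<in>M. l' B') = (real s * (\<Sum>B'\<in>M. l B') + (\<Sum>B'\<in>M. if B' = B then 1 else 0)) / (real s + 1)"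
    unfolding l'_def by (simp add: sum_divide_distrib[symmetric] sum.distrib sum_distrib_left)
  then have l'1: "(\<Sum>B'\<in>M. l' B') = 1" using l1 B by simp
  have l'0: "\<forall>B'\<in>M. 0 \<le> l' B'" using l0 by (simp add: l'_def)
  have coord': "real_of_int (x i + of_bool (i \<in> B))
      = real (Suc s) * (\<Sum>B'\<in>M. l' B' * (if i \<in> B' then 1 else 0))" if "i \<in> {1..n}" for i
  proof -
    have "real (Suc s) * (\<Sum>B'\<in>M. l' B' * (if i \<in> B' then 1 else 0))
        = (\<Sum>B'\<in>M. (real s * l B' + (if B' = B then 1 else 0)) * (if i \<in> B' then 1 else 0))"
      unfolding l'_def by (simp add: sum_divide_distrib[symmetric] add.commute)
    also have "\<dots> = real s * (\<Sum>B'\<in>M. l B' * (if i \<in> B' then 1 else 0))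
        + (\<Sum>B'\<in>M. (if B' = B then 1 else 0) * (if i \<in> B' then 1 else 0))"
      by (simp add: distrib_right sum.distrib sum_distrib_left mult.assoc)
    also have "(\<Sum>B'\<in>M. (if B' = B then 1 else 0) * (if i \<in> B' then 1 else 0 :: real))
        = (\<Sum>B'\<in>M. if B' = B then (if i \<in> B' then 1 else 0) else 0)"
      by (rule sum.cong) auto
    also have "real s * (\<Sum>B'\<in>M. l B' * (if i \<in> B' then 1 else 0)) = real_of_int (x i)"
      using coord that by simp
    also have "(\<Sum>B'\<in>M. if B' = B then (if i \<in> B' then 1 else 0) else 0) = (if i \<in> B then 1 else 0 :: real)"
      using B by (simp add: sum.delta)
    finally show ?thesis by simp
  qed
  have "\<forall>i. i \<notin> {1..n} \<longrightarrow> x i + of_bool (i \<in> B) = 0" using zero B by auto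
  then show ?thesis unfolding dilate_lattice_points_def using l'0 l'1 coord' by blast
qed

lemma le_diff_mult_pred:
  fixes q a c t :: int
  assumes "1 \<le> t" and "q * t \<le> a" and "c * t \<le> a"
  shows "q \<le> a - c * (t - 1)"
proof (cases "q \<le> c")
  case True
  then show ?thesis using assms(3) by (simp add: algebra_simps)
next
  case False
  have "a - c * (t - 1) - q = (a - q * t) + (q - c) * (t - 1)" by (simp add: algebra_simps)
  moreover have "0 \<le> (q - c) * (t - 1)" using False assms(1) by simp
  ultimately show ?thesis using assms(2) by linarith
qed

lemma exists_vertex_split:
  fixes t a :: int and r c x1 y1 x2 y2 :: nat
  assumes t: "1 \<le> t" and "x1 \<le> y1" and "x2 \<le> y2"
    and block1: "t * x1 \<le> a" "a \<le> t * y1"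
    and block2: "t * x2 \<le> r * t - a" "r * t - a \<le> t * y2"
    and prefix: "c * t \<le> a"
  shows "\<exists>b. c \<le> b \<and> x1 \<le> b \<and> r \<le> b + y2 \<and> b \<le> y1 \<and> x2 + b \<le> r \<and> int b \<le> a - c * (t - 1)"
proof -
  have cancel: "u \<le> v" if "t * int u \<le> t * int v" for u v :: nat
    using that t by (simp add: mult_le_cancel_left_pos)
  have "c \<le> y1" using cancel[of c y1] block1 prefix by (simp add: mult.commute)
  moreover have "r \<le> y1 + y2" using cancel[of r "y1 + y2"] block1 block2 by (simp add: algebra_simps)
  moreover have "c + x2 \<le> r" using cancel[of "c + x2" r] block2 prefix by (simp add: algebra_simps)
  moreover have "x1 + x2 \<le> r" using cancel[of "x1 + x2" r] block1 block2 by (simp add: algebra_simps)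
  moreover have "int (r - y2) \<le> a - c * (t - 1)"
  proof (rule le_diff_mult_pred[OF t _ prefix])
    show "int (r - y2) * t \<le> a"
    proof (cases "r \<le> y2")
      case True
      have "0 \<le> int c * t" using t by simp
      then show ?thesis using True prefix by simp
    next
      case False
      then show ?thesis using block2 by (simp add: of_nat_diff algebra_simps)
    qed
  qed
  moreover have "int c \<le> a - c * (t - 1)" and "int x1 \<le> a - c * (t - 1)"
    using le_diff_mult_pred[OF t _ prefix] prefix block1 by (auto simp: mult.commute)
  ultimately show ?thesis
    using assms(2,3) by (intro exI[of _ "max (max c x1) (r - y2)"]) (auto simp: max_def)
qed

lemma sum_bounded_by_counts:
  fixes x :: "nat \<Rightarrow> int"
  assumes "finite A" and "\<forall>i\<in>A. 0 \<le> x i \<and> x i \<le> t"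
  shows "t * int (card {i\<in>A. x i = t}) \<le> (\<Sum>i\<in>A. x i)"
    and "(\<Sum>i\<in>A. x i) \<le> t * int (card {i\<in>A. 1 \<le> x i})"
proof -
  have "t * int (card {i\<in>A. x i = t}) = (\<Sum>i\<in>{i\<in>A. x i = t}. x i)" by simp
  also have "\<dots> \<le> (\<Sum>i\<in>A. x i)" using assms by (intro sum_mono2) auto
  finally show "t * int (card {i\<in>A. x i = t}) \<le> (\<Sum>i\<in>A. x i)" .
  have "(\<Sum>i\<in>A. x i) = (\<Sum>i\<in>{i\<in>A. 1 \<le> x i}. x i)"
    using assms by (intro sum.mono_neutral_right) auto
  also have "\<dots> \<le> t * int (card {i\<in>A. 1 \<le> x i})"
    using assms sum_bounded_above[of "{i\<in>A. 1 \<le> x i}" x t] by (simp add: mult.commute)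
  finally show "(\<Sum>i\<in>A. x i) \<le> t * int (card {i\<in>A. 1 \<le> x i})" .
qed

lemma diff_vertex_in_prefix_box_points:
  assumes x: "x \<in> prefix_box_points n r m c t" and t: "1 \<le> t"
    and B: "B \<subseteq> {1..n}" "card B = r"
    and full: "\<forall>i\<in>{1..n}. x i = int t \<longrightarrow> i \<in> B" and pos: "\<forall>i\<in>B. 1 \<le> x i"
    and prefix_B: "int (card (B \<inter> {1..m})) \<le> (\<Sum>i\<in>{1..m}. x i) - int c * (int t - 1)"
  shows "(\<lambda>i. x i - of_bool (i \<in> B)) \<in> prefix_box_points n r m c (t - 1)"
proof -
  have zero: "\<forall>i. i \<notin> {1..n} \<longrightarrow> x i = 0" and bounds: "\<forall>i\<in>{1..n}. 0 \<le> x i \<and> x i \<le> int t"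
    and total: "(\<Sum>i\<in>{1..n}. x i) = int (r * t)"
    using x by (auto simp: prefix_box_points_def)
  have "0 \<le> x i - of_bool (i \<in> B) \<and> x i - of_bool (i \<in> B) \<le> int (t - 1)" if "i \<in> {1..n}" for i
  proof -
    have "0 \<le> x i" "x i \<le> int t" using bounds that by auto
    then show ?thesis
      using full pos that t by (cases "i \<in> B") (auto simp: of_nat_diff order_less_le)
  qed
  moreover have sub: "(\<Sum>i\<in>I. x i - of_bool (i \<in> B)) = (\<Sum>i\<in>I. x i) - int (card (I \<inter> B))"
    if "finite I" for I
    using that by (simp add: sum_subtractf of_bool_def sum.If_cases Int_def)
  moreover have "(\<Sum>i\<in>{1..n}. x i - of_bool (i \<in> B)) = int (r * (t - 1))"
    using sub[of "{1..n}"] B total t by (simp add: Int_absorb1 of_nat_diff algebra_simps)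
  moreover have "int (c * (t - 1)) \<le> (\<Sum>i\<in>{1..m}. x i - of_bool (i \<in> B))"
    using sub[of "{1..m}"] prefix_B t by (simp add: Int_commute of_nat_diff algebra_simps)
  ultimately show ?thesis
    using zero B unfolding prefix_box_points_def by auto
qed

text \<open>The peeled vertex \<open>B\<close> must contain the coordinates equal to \<open>t\<close> and avoid those equal
  to \<open>0\<close>; its size \<open>b\<close> on \<open>{1..m}\<close> is the count provided by \<open>exists_vertex_split\<close>.\<close>

lemma peel_vertex_prefix_box_points:
  assumes "m \<le> n" and t: "1 \<le> t" and x: "x \<in> prefix_box_points n r m c t"
  shows "\<exists>B\<in>prefix_bases n r m c. (\<lambda>i. x i - of_bool (i \<in> B)) \<in> prefix_box_points n r m c (t - 1)"
proof -
  have bounds: "\<forall>i\<in>{1..n}. 0 \<le> x i \<and> x i \<le> int t"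
    and total: "(\<Sum>i\<in>{1..n}. x i) = int (r * t)" and prefix: "int (c * t) \<le> (\<Sum>i\<in>{1..m}. x i)"
    using x by (auto simp: prefix_box_points_def)
  define A1 where "A1 = {1..m}"
  define A2 where "A2 = {Suc m..n}"
  have split: "{1..n} = A1 \<union> A2" "A1 \<inter> A2 = {}" and fin: "finite A1" "finite A2"
    using assms(1) by (auto simp: A1_def A2_def)
  define a where "a = (\<Sum>i\<in>A1. x i)"
  have sum_A2: "(\<Sum>i\<in>A2. x i) = int (r * t) - a"
    using total unfolding a_def split(1) by (simp add: sum.union_disjoint[OF fin split(2)])
  define X1 where "X1 = {i\<in>A1. x i = int t}"
  define Y1 where "Y1 = {i\<in>A1. 1 \<le> x i}"
  define X2 where "X2 = {i\<in>A2. x i = int t}"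
  define Y2 where "Y2 = {i\<in>A2. 1 \<le> x i}"
  have XY: "X1 \<subseteq> Y1" "X2 \<subseteq> Y2" and finY: "finite Y1" "finite Y2"
    using t fin by (auto simp: X1_def Y1_def X2_def Y2_def)
  then have card_XY: "card X1 \<le> card Y1" "card X2 \<le> card Y2" by (auto intro: card_mono)
  have "\<forall>i\<in>A1. 0 \<le> x i \<and> x i \<le> int t" "\<forall>i\<in>A2. 0 \<le> x i \<and> x i \<le> int t"
    using bounds split by auto
  note bounds1 = sum_bounded_by_counts[OF fin(1) this(1)] and bounds2 = sum_bounded_by_counts[OF fin(2) this(2)]
  obtain b where b: "c \<le> b" "card X1 \<le> b" "r \<le> b + card Y2" "b \<le> card Y1"
    "card X2 + b \<le> r" "int b \<le> a - c * (int t - 1)"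
    using exists_vertex_split[of "int t" "card X1" "card Y1" "card X2" "card Y2" a r c]
      t card_XY bounds1 bounds2 sum_A2 prefix
    by (auto simp: a_def A1_def X1_def Y1_def X2_def Y2_def mult.commute)
  obtain B1 where B1: "X1 \<subseteq> B1" "B1 \<subseteq> Y1" "card B1 = b"
    using exists_subset_between[of X1 b Y1] b(2,4) XY finY by blast
  have "card X2 \<le> r - b" "r - b \<le> card Y2" using b(3,5) by auto
  then obtain B2 where B2: "X2 \<subseteq> B2" "B2 \<subseteq> Y2" "card B2 = r - b"
    using exists_subset_between[of X2 "r - b" Y2] XY finY by blast
  define B where "B = B1 \<union> B2"
  have B12: "B1 \<subseteq> A1" "B2 \<subseteq> A2" using B1 B2 by (auto simp: Y1_def Y2_def)
  then have card_B: "card B = r"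
    using B1 B2 b split(2) fin by (subst B_def, subst card_Un_disjoint) (auto intro: finite_subset)
  have prefix_B: "B \<inter> {1..m} = B1" using B12 by (auto simp: B_def A1_def A2_def)
  have B_sub: "B \<subseteq> {1..n}" using B12 split by (auto simp: B_def)
  have "B \<in> prefix_bases n r m c"
    using B_sub card_B prefix_B B1 \<open>c \<le> b\<close> by (auto simp: prefix_bases_def)
  moreover have "\<forall>i\<in>{1..n}. x i = int t \<longrightarrow> i \<in> B" and "\<forall>i\<in>B. 1 \<le> x i"
    using B1 B2 split by (auto simp: B_def X1_def Y1_def X2_def Y2_def)
  moreover have "int (card (B \<inter> {1..m})) \<le> (\<Sum>i\<in>{1..m}. x i) - int c * (int t - 1)"
    using prefix_B B1(3) b(6) by (simp add: a_def A1_def)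
  ultimately show ?thesis
    using diff_vertex_in_prefix_box_points[OF x t B_sub card_B] by blast
qed

lemma prefix_box_points_subset_dilate:
  assumes "m \<le> n" and "prefix_bases n r m c \<noteq> {}"
  shows "prefix_box_points n r m c t \<subseteq> dilate_lattice_points n (prefix_bases n r m c) t"
proof (induction t)
  case 0
  have "prefix_box_points n r m c 0 \<subseteq> {\<lambda>_. 0}"
    by (auto simp: prefix_box_points_def fun_eq_iff) (meson atLeastAtMost_iff order_antisym)
  then show ?case
    using zero_in_dilate_lattice_points[OF finite_prefix_bases assms(2)] by blast
next
  case (Suc t)
  show ?case
  proof
    fix x assume "x \<in> prefix_box_points n r m c (Suc t)"
    then obtain B where B: "B \<in> prefix_bases n r m c"
      and "(\<lambda>i. x i - of_bool (i \<in> B)) \<in> prefix_box_points n r m c t"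
      using peel_vertex_prefix_box_points[OF assms(1)] by fastforce
    then have "(\<lambda>i. x i - of_bool (i \<in> B)) \<in> dilate_lattice_points n (prefix_bases n r m c) t"
      using Suc.IH by blast
    from add_vertex_dilate_lattice_points[OF this B finite_prefix_bases]
    show "x \<in> dilate_lattice_points n (prefix_bases n r m c) (Suc t)"
      using B by (simp add: prefix_bases_def)
  qed
qed

lemma dilate_lattice_points_prefix_bases:
  assumes "m \<le> n" and "1 \<le> t"
  shows "dilate_lattice_points n (prefix_bases n r m c) t = prefix_box_points n r m c t"
proof (cases "prefix_box_points n r m c t = {}")
  case True
  then show ?thesis using dilate_lattice_points_subset_prefix_box[OF assms(1)] by blast
next
  case False
  then have "prefix_bases n r m c \<noteq> {}"
    using peel_vertex_prefix_box_points[OF assms] by blast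
  then show ?thesis
    using dilate_lattice_points_subset_prefix_box prefix_box_points_subset_dilate assms(1)
    by (simp add: subset_antisym)
qed

section \<open>Bounded compositions\<close>

definition bounded_comps :: "nat \<Rightarrow> nat \<Rightarrow> nat \<Rightarrow> nat list set" where
  "bounded_comps d t s = {xs. length xs = d \<and> (\<forall>v\<in>set xs. v \<le> t) \<and> sum_list xs = s}"

definition num_comps :: "nat \<Rightarrow> nat \<Rightarrow> nat \<Rightarrow> nat" where
  "num_comps d t s = card (bounded_comps d t s)"

lemma finite_bounded_lists: "finite {xs :: nat list. length xs = d \<and> (\<forall>v\<in>set xs. v \<le> t) \<and> P xs}"
  by (rule finite_subset[OF _ finite_lists_length_eq[of "{0..t}" d]]) auto

lemma card_bounded_lists_split_sums:
  "card {xs. length xs = m + p \<and> (\<forall>v\<in>set xs. v \<le> t) \<and>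
             sum_list (take m xs) = a \<and> sum_list (drop m xs) = b}
   = num_comps m t a * num_comps p t b"
proof -
  have "{xs. length xs = m + p \<and> (\<forall>v\<in>set xs. v \<le> t) \<and>
             sum_list (take m xs) = a \<and> sum_list (drop m xs) = b}
      = (\<lambda>(ys, zs). ys @ zs) ` (bounded_comps m t a \<times> bounded_comps p t b)"
  proof (rule set_eqI)
    fix xs :: "nat list"
    have "(take m xs, drop m xs) \<in> bounded_comps m t a \<times> bounded_comps p t b"
      if "length xs = m + p" "\<forall>v\<in>set xs. v \<le> t" "sum_list (take m xs) = a" "sum_list (drop m xs) = b"
      using that by (auto simp: bounded_comps_def dest: in_set_takeD in_set_dropD)
    then show "xs \<in> {xs. length xs = m + p \<and> (\<forall>v\<in>set xs. v \<le> t) \<and>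
             sum_list (take m xs) = a \<and> sum_list (drop m xs) = b}
      \<longleftrightarrow> xs \<in> (\<lambda>(ys, zs). ys @ zs) ` (bounded_comps m t a \<times> bounded_comps p t b)"
      by (auto simp: bounded_comps_def intro!: image_eqI[of _ _ "(take m xs, drop m xs)"])
  qed
  moreover have "inj_on (\<lambda>(ys, zs). ys @ zs) (bounded_comps m t a \<times> bounded_comps p t b)"
    by (auto simp: inj_on_def bounded_comps_def)
  ultimately show ?thesis
    by (simp add: card_image card_cartesian_product num_comps_def)
qed

lemma card_bounded_lists_prefix_sum_ge:
  assumes "m \<le> n"
  shows "card {xs. length xs = n \<and> (\<forall>v\<in>set xs. v \<le> t) \<and> sum_list xs = s \<and> lo \<le> sum_list (take m xs)}
       = (\<Sum>a\<in>{lo..s}. num_comps m t a * num_comps (n - m) t (s - a))"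
proof -
  have "{xs. length xs = n \<and> (\<forall>v\<in>set xs. v \<le> t) \<and> sum_list xs = s \<and> lo \<le> sum_list (take m xs)}
      = (\<Union>a\<in>{lo..s}. {xs. length xs = m + (n - m) \<and> (\<forall>v\<in>set xs. v \<le> t) \<and>
             sum_list (take m xs) = a \<and> sum_list (drop m xs) = s - a})"
  proof (rule set_eqI)
    fix xs :: "nat list"
    have "sum_list xs = sum_list (take m xs) + sum_list (drop m xs)"
      by (metis append_take_drop_id sum_list_append)
    then show "xs \<in> {xs. length xs = n \<and> (\<forall>v\<in>set xs. v \<le> t) \<and> sum_list xs = s \<and> lo \<le> sum_list (take m xs)}
      \<longleftrightarrow> xs \<in> (\<Union>a\<in>{lo..s}. {xs. length xs = m + (n - m) \<and> (\<forall>v\<in>set xs. v \<le> t) \<and>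
             sum_list (take m xs) = a \<and> sum_list (drop m xs) = s - a})"
      using assms by auto
  qed
  moreover have "card (\<Union>a\<in>{lo..s}. {xs. length xs = m + (n - m) \<and> (\<forall>v\<in>set xs. v \<le> t) \<and>
             sum_list (take m xs) = a \<and> sum_list (drop m xs) = s - a})
    = (\<Sum>a\<in>{lo..s}. card {xs. length xs = m + (n - m) \<and> (\<forall>v\<in>set xs. v \<le> t) \<and>
             sum_list (take m xs) = a \<and> sum_list (drop m xs) = s - a})"
    by (rule card_UN_disjoint) (auto simp: finite_bounded_lists)
  ultimately show ?thesis by (simp add: card_bounded_lists_split_sums)
qed

lemma num_comps_convolution:
  "m \<le> n \<Longrightarrow> num_comps n t s = (\<Sum>a\<in>{0..s}. num_comps m t a * num_comps (n - m) t (s - a))"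
  using card_bounded_lists_prefix_sum_ge[of m n t s 0] by (simp add: num_comps_def bounded_comps_def)

definition lattice_point_of_list :: "nat list \<Rightarrow> nat \<Rightarrow> int" where
  "lattice_point_of_list xs i = (if i \<in> {1..length xs} then int (xs ! (i - 1)) else 0)"

lemma sum_lattice_point_of_list:
  "m \<le> length xs \<Longrightarrow> (\<Sum>i\<in>{1..m}. lattice_point_of_list xs i) = int (sum_list (take m xs))"
proof (induction m)
  case (Suc m)
  have "{1..Suc m} = insert (Suc m) {1..m}" by auto
  then show ?case using Suc by (simp add: lattice_point_of_list_def take_Suc_conv_app_nth)
qed simp

lemma bij_betw_lattice_point_of_list:
  assumes "m \<le> n"
  shows "bij_betw lattice_point_of_list
    {xs. length xs = n \<and> (\<forall>v\<in>set xs. v \<le> t) \<and> sum_list xs = r * t \<and> c * t \<le> sum_list (take m xs)}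
    (prefix_box_points n r m c t)" (is "bij_betw _ ?L _")
proof -
  define L where "L = ?L"
  define list_of where "list_of = (\<lambda>x :: nat \<Rightarrow> int. map (\<lambda>i. nat (x (Suc i))) [0..<n])"
  have "bij_betw lattice_point_of_list L (prefix_box_points n r m c t)"
  proof (rule bij_betw_byWitness[where f' = list_of])
    show "\<forall>xs\<in>L. list_of (lattice_point_of_list xs) = xs"
      by (auto simp: L_def list_of_def lattice_point_of_list_def intro: nth_equalityI)
    show "\<forall>x\<in>prefix_box_points n r m c t. lattice_point_of_list (list_of x) = x"
      by (auto simp: prefix_box_points_def list_of_def lattice_point_of_list_def fun_eq_iff
          not_less_eq_eq Suc_le_eq simp del: upt_Suc)
    show "lattice_point_of_list ` L \<subseteq> prefix_box_points n r m c t"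
    proof
      fix x assume "x \<in> lattice_point_of_list ` L"
      then obtain xs where xs: "xs \<in> L" and x: "x = lattice_point_of_list xs" by blast
      then have len: "length xs = n" by (simp add: L_def)
      have "xs ! (i - 1) \<le> t" if "i \<in> {1..n}" for i
        using xs that len nth_mem[of "i - 1" xs] by (auto simp: L_def)
      then have "\<forall>i\<in>{1..n}. 0 \<le> x i \<and> x i \<le> int t"
        by (simp add: x lattice_point_of_list_def len)
      moreover have "\<forall>i. i \<notin> {1..n} \<longrightarrow> x i = 0"
        by (simp add: x lattice_point_of_list_def len)
      moreover have "int (c * t) \<le> int (sum_list (take m xs))"
        using xs unfolding L_def of_nat_le_iff by simp
      ultimately show "x \<in> prefix_box_points n r m c t"
        using xs len assms sum_lattice_point_of_list[of n xs] sum_lattice_point_of_list[of m xs]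
        by (simp add: L_def prefix_box_points_def x)
    qed
    show "list_of ` prefix_box_points n r m c t \<subseteq> L"
    proof
      fix ys assume "ys \<in> list_of ` prefix_box_points n r m c t"
      then obtain x where x: "x \<in> prefix_box_points n r m c t" and ys: "ys = list_of x" by blast
      have len: "length ys = n" by (simp add: ys list_of_def)
      have roundtrip: "lattice_point_of_list ys = x"
        using \<open>\<forall>x\<in>prefix_box_points n r m c t. lattice_point_of_list (list_of x) = x\<close> x ys by blast
      have "x (Suc i) \<le> int t" if "i < n" for i
        using x that by (auto simp: prefix_box_points_def)
      then have "\<forall>v\<in>set ys. v \<le> t" by (auto simp: ys list_of_def nat_le_iff)
      moreover have "int (sum_list ys) = int (r * t)"
        using sum_lattice_point_of_list[of n ys] len roundtrip x by (simp add: prefix_box_points_def)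
      moreover have "int (c * t) \<le> int (sum_list (take m ys))"
        using sum_lattice_point_of_list[of m ys] len roundtrip x assms by (simp add: prefix_box_points_def)
      ultimately show "ys \<in> L" using len unfolding L_def of_nat_eq_iff of_nat_le_iff by blast
    qed
  qed
  then show ?thesis by (simp add: L_def)
qed

lemma card_prefix_box_points:
  assumes "m \<le> n"
  shows "card (prefix_box_points n r m c t)
       = (\<Sum>a\<in>{c * t..r * t}. num_comps m t a * num_comps (n - m) t (r * t - a))"
  using bij_betw_same_card[OF bij_betw_lattice_point_of_list[OF assms]]
    card_bounded_lists_prefix_sum_ge[OF assms] by simp

lemma sum_list_map_diff:
  "\<forall>v\<in>set xs. v \<le> t \<Longrightarrow> sum_list (map (\<lambda>v. t - v) xs) = length xs * t - sum_list xs"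
proof (induction xs)
  case (Cons x xs)
  have "sum_list xs \<le> length xs * t" using Cons.prems by (induction xs) auto
  then show ?case using Cons by (simp add: algebra_simps)
qed simp

lemma num_comps_complement:
  assumes "s \<le> d * t"
  shows "num_comps d t (d * t - s) = num_comps d t s"
proof -
  let ?f = "map (\<lambda>v. t - v)"
  have involution: "?f (?f xs) = xs" if "\<forall>v\<in>set xs. v \<le> t" for xs
    using that by (induction xs) auto
  have "?f ` bounded_comps d t s = bounded_comps d t (d * t - s)"
  proof
    show "?f ` bounded_comps d t s \<subseteq> bounded_comps d t (d * t - s)"
      using sum_list_map_diff by (auto simp: bounded_comps_def)
    show "bounded_comps d t (d * t - s) \<subseteq> ?f ` bounded_comps d t s"
    proof
      fix ys assume ys: "ys \<in> bounded_comps d t (d * t - s)"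
      then have "?f ys \<in> bounded_comps d t s"
        using sum_list_map_diff[of ys t] assms by (auto simp: bounded_comps_def)
      moreover have "ys = ?f (?f ys)" using involution[of ys] ys by (simp add: bounded_comps_def)
      ultimately show "ys \<in> ?f ` bounded_comps d t s" by (rule rev_image_eqI)
    qed
  qed
  moreover have "inj_on ?f (bounded_comps d t s)"
    by (rule inj_on_inverseI[where g = ?f]) (use involution in \<open>auto simp: bounded_comps_def\<close>)
  ultimately show ?thesis by (metis card_image num_comps_def)
qed

lemma num_comps_0: "num_comps 0 t s = (if s = 0 then 1 else 0)"
proof -
  have "bounded_comps 0 t s = (if s = 0 then {[]} else {})" by (auto simp: bounded_comps_def)
  then show ?thesis by (simp add: num_comps_def)
qed

lemma num_comps_1: "num_comps 1 t s = (if s \<le> t then 1 else 0)"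
proof -
  have "bounded_comps 1 t s = (if s \<le> t then {[s]} else {})"
    by (auto simp: bounded_comps_def length_Suc_conv)
  then show ?thesis by (simp add: num_comps_def)
qed

text \<open>Integer arguments make the inclusion-exclusion terms with negative argument vanish.\<close>

fun weak_comps :: "nat \<Rightarrow> int \<Rightarrow> int" where
  "weak_comps 0 s = (if s = 0 then 1 else 0)"
| "weak_comps (Suc d) s = (\<Sum>z\<in>{0..s}. weak_comps d z)"

lemma weak_comps_neg: "s < 0 \<Longrightarrow> weak_comps d s = 0"
  by (cases d) auto

lemma weak_comps_Suc_rec: "weak_comps (Suc d) s = weak_comps (Suc d) (s - 1) + weak_comps d s"
proof (cases "s < 0")
  case False
  then have "{0..s} = insert s {0..s - 1}" by auto
  then show ?thesis by simp
qed (simp add: weak_comps_neg)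

lemma weak_comps_diff:
  "weak_comps (Suc d) s - weak_comps (Suc d) (s - int (Suc t)) = (\<Sum>v\<in>{0..t}. weak_comps d (s - int v))"
proof (induction t)
  case 0
  then show ?case using weak_comps_Suc_rec[of d s] by simp
next
  case (Suc t)
  then show ?case
    using weak_comps_Suc_rec[of d "s - int (Suc t)"] by (simp add: algebra_simps)
qed

definition num_comps_int :: "nat \<Rightarrow> nat \<Rightarrow> int \<Rightarrow> int" where
  "num_comps_int d t s = (if s < 0 then 0 else int (num_comps d t (nat s)))"

lemma num_comps_int_of_nat [simp]: "num_comps_int d t (int s) = int (num_comps d t s)"
  by (simp add: num_comps_int_def)

lemma num_comps_int_Suc: "num_comps_int (Suc d) t s = (\<Sum>v\<in>{0..t}. num_comps_int d t (s - int v))"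
proof (cases "s < 0")
  case True
  then show ?thesis by (simp add: num_comps_int_def)
next
  case False
  then obtain s' where s: "s = int s'" by (metis nonneg_int_cases not_less)
  have "int (num_comps (Suc d) t s') = (\<Sum>a\<in>{0..s'}. int (num_comps 1 t a) * int (num_comps d t (s' - a)))"
    using num_comps_convolution[of 1 "Suc d" t s'] by simp
  also have "\<dots> = (\<Sum>a\<in>{0..s'}. if a \<in> {0..t} then int (num_comps d t (s' - a)) else 0)"
    using num_comps_1[of t] by (intro sum.cong) auto
  also have "\<dots> = (\<Sum>a\<in>{0..s'} \<inter> {0..t}. int (num_comps d t (s' - a)))"
    by (rule sum.inter_restrict[symmetric]) simp
  also have "\<dots> = (\<Sum>v\<in>{0..t} \<inter> {0..s'}. int (num_comps d t (s' - v)))"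
    by (simp only: Int_commute)
  also have "\<dots> = (\<Sum>v\<in>{0..t}. if v \<in> {0..s'} then int (num_comps d t (s' - v)) else 0)"
    by (rule sum.inter_restrict) simp
  also have "\<dots> = (\<Sum>v\<in>{0..t}. num_comps_int d t (s - int v))"
    by (rule sum.cong) (auto simp: num_comps_int_def s nat_diff_distrib)
  finally show ?thesis using s by (simp add: num_comps_int_def)
qed

lemma alternating_binomial_sum_differences:
  fixes g :: "nat \<Rightarrow> int"
  shows "(\<Sum>j\<le>d. (-1)^j * int (d choose j) * (g j - g (Suc j)))
       = (\<Sum>j\<le>Suc d. (-1)^j * int (Suc d choose j) * g j)"
proof -
  define h where "h = (\<lambda>j. (-1::int)^j * int (d choose j) * g j)"
  have "(\<Sum>j\<le>d. h j) = (\<Sum>j\<le>Suc d. h j)" by (simp add: h_def)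
  also have "\<dots> = h 0 + (\<Sum>j\<le>d. h (Suc j))" by (rule sum.atMost_Suc_shift)
  finally have shifted: "(\<Sum>j\<le>d. h j) = g 0 - (\<Sum>j\<le>d. (-1)^j * int (d choose Suc j) * g (Suc j))"
    by (simp add: h_def sum_negf)
  have "(\<Sum>j\<le>Suc d. (-1)^j * int (Suc d choose j) * g j)
      = g 0 + (\<Sum>j\<le>d. (-1)^(Suc j) * int (Suc d choose Suc j) * g (Suc j))"
    by (subst sum.atMost_Suc_shift) simp
  also have "(\<Sum>j\<le>d. (-1)^(Suc j) * int (Suc d choose Suc j) * g (Suc j))
      = (\<Sum>j\<le>d. - ((-1)^j * int (d choose Suc j) * g (Suc j)) - (-1)^j * int (d choose j) * g (Suc j))"
    by (rule sum.cong) (auto simp: algebra_simps)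
  finally have "(\<Sum>j\<le>Suc d. (-1)^j * int (Suc d choose j) * g j)
      = (\<Sum>j\<le>d. h j) - (\<Sum>j\<le>d. (-1)^j * int (d choose j) * g (Suc j))"
    using shifted by (simp add: sum_subtractf sum_negf)
  then show ?thesis by (simp add: h_def sum_subtractf[symmetric] right_diff_distrib)
qed

lemma num_comps_inclusion_exclusion:
  "num_comps_int d t s = (\<Sum>j\<le>d. (-1)^j * int (d choose j) * weak_comps d (s - int j * int (Suc t)))"
proof (induction d arbitrary: s)
  case 0
  then show ?case by (simp add: num_comps_int_def num_comps_0)
next
  case (Suc d)
  have "num_comps_int (Suc d) t s
      = (\<Sum>j\<le>d. (-1)^j * int (d choose j) * (\<Sum>v\<in>{0..t}. weak_comps d (s - int j * int (Suc t) - int v)))"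
    by (simp add: num_comps_int_Suc Suc.IH sum_distrib_left sum.swap[of _ "{0..t}"] algebra_simps)
  also have "\<dots> = (\<Sum>j\<le>d. (-1)^j * int (d choose j) *
      (weak_comps (Suc d) (s - int j * int (Suc t)) - weak_comps (Suc d) (s - int (Suc j) * int (Suc t))))"
    using weak_comps_diff[of d "s - int _ * int (Suc t)" t] by (simp add: algebra_simps)
  also have "\<dots> = (\<Sum>j\<le>Suc d. (-1)^j * int (Suc d choose j) * weak_comps (Suc d) (s - int j * int (Suc t)))"
    by (rule alternating_binomial_sum_differences)
  finally show ?case .
qed

text \<open>\<open>poly (binom_poly d) y\<close> is \<open>(y + d choose d)\<close>, extended polynomially to all real \<open>y\<close>.\<close>

definition binom_poly :: "nat \<Rightarrow> real poly" where
  "binom_poly d = smult (1 / fact d) (\<Prod>i<d. [:real (Suc i), 1:])"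

lemma poly_binom_poly: "poly (binom_poly d) y = (\<Prod>i<d. y + real (Suc i)) / fact d"
  by (simp add: binom_poly_def poly_prod add.commute)

lemma poly_binom_poly_Suc_rec:
  "poly (binom_poly (Suc d)) y = poly (binom_poly (Suc d)) (y - 1) + poly (binom_poly d) y"
proof -
  define P where "P = (\<Prod>i<d. y + real (Suc i))"
  have "(\<Prod>i<Suc d. y - 1 + real (Suc i)) = (y - 1 + 1) * (\<Prod>i<d. y - 1 + real (Suc (Suc i)))"
    by (subst prod.lessThan_Suc_shift) simp
  also have "(\<Prod>i<d. y - 1 + real (Suc (Suc i))) = P"
    unfolding P_def by (rule prod.cong) auto
  finally have "(\<Prod>i<Suc d. y - 1 + real (Suc i)) = y * P" by simp
  then have "poly (binom_poly (Suc d)) (y - 1) = y * P / fact (Suc d)"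
    by (simp add: poly_binom_poly)
  moreover have "poly (binom_poly (Suc d)) y = P * (y + real (Suc d)) / fact (Suc d)"
    by (simp add: poly_binom_poly P_def)
  moreover have "poly (binom_poly d) y = P * (real d + 1) / fact (Suc d)"
    by (simp add: poly_binom_poly P_def add.commute)
  ultimately show ?thesis by (simp add: add_divide_distrib[symmetric] algebra_simps)
qed

lemma weak_comps_eq_binom_poly:
  "- int d \<le> y \<Longrightarrow> real_of_int (weak_comps (Suc d) y) = poly (binom_poly d) (real_of_int y)"
proof (induction d arbitrary: y)
  case 0
  then have "weak_comps (Suc 0) y = 1" by (simp add: sum.delta)
  then show ?case by (simp add: binom_poly_def)
next
  case (Suc d)
  note IH = Suc.IH
  have "real_of_int (weak_comps (Suc (Suc d)) (int k - int d - 1))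
      = poly (binom_poly (Suc d)) (real_of_int (int k - int d - 1))" for k
  proof (induction k)
    case 0
    have "poly (binom_poly (Suc d)) (- (real d + 1)) = 0"
      by (simp add: poly_binom_poly prod.lessThan_Suc)
    then show ?case by (simp add: weak_comps_neg)
  next
    case (Suc k)
    then show ?case
      using weak_comps_Suc_rec[of "Suc d" "int (Suc k) - int d - 1"]
        poly_binom_poly_Suc_rec[of d "real_of_int (int (Suc k) - int d - 1)"]
        IH[of "int k - int d"]
      by (simp del: weak_comps.simps add: algebra_simps)
  qed
  from this[of "nat (y + int d + 1)"] show ?case using Suc.prems by simp
qed

lemma num_comps_le_bound:
  assumes "1 \<le> d" and "s \<le> t"
  shows "real (num_comps d t s) = poly (binom_poly (d - 1)) (real s)"
proof -
  have "int (num_comps d t s) = (\<Sum>j\<le>d. (-1)^j * int (d choose j) * weak_comps d (int s - int j * int (Suc t)))"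
    using num_comps_inclusion_exclusion[of d t "int s"] by simp
  also have "\<dots> = (\<Sum>j\<in>{0}. (-1)^j * int (d choose j) * weak_comps d (int s - int j * int (Suc t)))"
  proof (rule sum.mono_neutral_right)
    show "\<forall>j\<in>{..d} - {0}. (-1)^j * int (d choose j) * weak_comps d (int s - int j * int (Suc t)) = 0"
    proof
      fix j assume "j \<in> {..d} - {0}"
      then have "int (Suc t) \<le> int j * int (Suc t)" by simp
      then have "int s - int j * int (Suc t) < 0" using assms(2) by linarith
      then show "(-1)^j * int (d choose j) * weak_comps d (int s - int j * int (Suc t)) = 0"
        by (simp add: weak_comps_neg)
    qed
  qed auto
  finally have "int (num_comps d t s) = weak_comps (Suc (d - 1)) (int s)"
    using assms(1) by (simp del: weak_comps.simps)
  then have "real (num_comps d t s) = real_of_int (weak_comps (Suc (d - 1)) (int s))"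
    by (metis of_int_of_nat_eq)
  also have "\<dots> = poly (binom_poly (d - 1)) (real s)"
    by (subst weak_comps_eq_binom_poly) simp_all
  finally show ?thesis .
qed

definition hypersimplex_poly :: "nat \<Rightarrow> nat \<Rightarrow> real poly" where
  "hypersimplex_poly n k = (\<Sum>j\<le>k. smult ((-1)^j * real (n choose j))
                              (pcompose (binom_poly (n - 1)) [:- real j, real k - real j:]))"

lemma num_comps_multiple:
  assumes "k < n"
  shows "real (num_comps n t (k * t)) = poly (hypersimplex_poly n k) (real t)"
proof -
  let ?term = "\<lambda>j. (-1)^j * int (n choose j) * weak_comps n (int (k * t) - int j * int (Suc t))"
  have "int (num_comps n t (k * t)) = (\<Sum>j\<le>n. ?term j)"
    using num_comps_inclusion_exclusion[of n t "int (k * t)"] by (simp only: num_comps_int_of_nat)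
  also have "\<dots> = (\<Sum>j\<le>k. ?term j)"
  proof (rule sum.mono_neutral_right)
    show "\<forall>j\<in>{..n} - {..k}. ?term j = 0"
    proof
      fix j assume "j \<in> {..n} - {..k}"
      then have "int k * int t \<le> int j * int t" and "k < j" by (auto simp: mult_right_mono)
      then show "?term j = 0" by (simp add: weak_comps_neg algebra_simps)
    qed
  qed (use assms in auto)
  finally have "real (num_comps n t (k * t)) = (\<Sum>j\<le>k. real_of_int (?term j))"
    by (metis of_int_of_nat_eq of_int_sum)
  also have "\<dots> = poly (hypersimplex_poly n k) (real t)"
    unfolding hypersimplex_poly_def poly_sum
  proof (rule sum.cong[OF refl])
    fix j assume "j \<in> {..k}"
    then have "int j * int t \<le> int k * int t" by (simp add: mult_right_mono)
    then have "- int (n - 1) \<le> int (k * t) - int j * int (Suc t)"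
      using \<open>j \<in> {..k}\<close> assms by (simp add: algebra_simps)
    from weak_comps_eq_binom_poly[OF this] assms
    show "real_of_int (?term j) = poly (smult ((-1)^j * real (n choose j))
                (pcompose (binom_poly (n - 1)) [:- real j, real k - real j:])) (real t)"
      by (simp add: poly_pcompose algebra_simps)
  qed
  finally show ?thesis .
qed

section \<open>Polynomiality\<close>

lemma power_sums_poly: "\<exists>P :: real poly. \<forall>s. poly P (real s) = (\<Sum>a\<le>s. real a ^ d)"
proof (induction d rule: less_induct)
  case (less d)
  then have "\<forall>j\<in>{..<d}. \<exists>P :: real poly. \<forall>s. poly P (real s) = (\<Sum>a\<le>s. real a ^ j)"
    by blast
  from bchoice[OF this] obtain Q
    where Q: "\<forall>j\<in>{..<d}. \<forall>s. poly (Q j) (real s) = (\<Sum>a\<le>s. real a ^ j)" by blast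
  define P where "P = smult (1 / real (Suc d))
    ([:1, 1:] ^ Suc d - (\<Sum>j<d. smult (real (Suc d choose j)) (Q j)))"
  have binomial_step: "(x + 1) ^ Suc d - x ^ Suc d = (\<Sum>j\<le>d. real (Suc d choose j) * x ^ j)"
    for x :: real
  proof -
    have "(x + 1) ^ Suc d = (\<Sum>j\<le>Suc d. real (Suc d choose j) * x ^ j * 1 ^ (Suc d - j))"
      by (rule binomial_ring)
    then show ?thesis by (simp add: sum.atMost_Suc)
  qed
  have "poly P (real s) = (\<Sum>a\<le>s. real a ^ d)" for s
  proof -
    have "(real s + 1) ^ Suc d = (\<Sum>a<Suc s. real (Suc a) ^ Suc d - real a ^ Suc d)"
      by (subst sum_lessThan_telescope) (simp add: add.commute)
    also have "\<dots> = (\<Sum>a\<le>s. \<Sum>j\<le>d. real (Suc d choose j) * real a ^ j)"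
      by (simp add: lessThan_Suc_atMost binomial_step[symmetric] add.commute)
    also have "\<dots> = (\<Sum>j\<le>d. real (Suc d choose j) * (\<Sum>a\<le>s. real a ^ j))"
      by (subst sum.swap) (simp add: sum_distrib_left)
    also have "\<dots> = (\<Sum>j<d. real (Suc d choose j) * poly (Q j) (real s))
                    + real (Suc d) * (\<Sum>a\<le>s. real a ^ d)"
      using Q by (simp add: lessThan_Suc_atMost[symmetric])
    finally show ?thesis
      by (simp add: P_def poly_sum field_simps)
  qed
  then show ?case by blast
qed

lemma partial_sums_poly:
  fixes q :: "real poly"
  shows "\<exists>P. \<forall>s. poly P (real s) = (\<Sum>a\<le>s. poly q (real a))"
proof -
  obtain Q where Q: "\<forall>i s. poly (Q i) (real s) = (\<Sum>a\<le>s. real a ^ i)"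
    using power_sums_poly by metis
  have "poly (\<Sum>i\<le>degree q. smult (coeff q i) (Q i)) (real s)
      = (\<Sum>i\<le>degree q. coeff q i * (\<Sum>a\<le>s. real a ^ i))" for s
    by (simp add: poly_sum Q)
  also have "(\<Sum>i\<le>degree q. coeff q i * (\<Sum>a\<le>s. real a ^ i)) = (\<Sum>a\<le>s. poly q (real a))" for s
    by (simp add: poly_altdef sum_distrib_left) (rule sum.swap)
  finally have "poly (\<Sum>i\<le>degree q. smult (coeff q i) (Q i)) (real s) = (\<Sum>a\<le>s. poly q (real a))" for s .
  then show ?thesis by blast
qed

lemma poly_eqI_positive_nats:
  fixes p q :: "real poly"
  assumes "\<forall>t\<ge>1. poly p (real t) = poly q (real t)"
  shows "p = q"
proof (rule ccontr)
  assume "p \<noteq> q"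
  then have "finite {x. poly (p - q) x = 0}" by (intro poly_roots_finite) simp
  moreover have "range (\<lambda>t. real (Suc t)) \<subseteq> {x. poly (p - q) x = 0}"
    using assms by auto
  ultimately have "finite (range (\<lambda>t. real (Suc t)))" by (rule finite_subset[rotated])
  moreover have "inj (\<lambda>t. real (Suc t))" by (auto simp: inj_on_def)
  ultimately show False using finite_imageD by blast
qed

lemma ehrhart_poly_eqI:
  assumes "\<forall>t\<ge>1. poly p (real t) = real (card (dilate_lattice_points n B t))"
  shows "ehrhart_poly n B = p"
  unfolding ehrhart_poly_def
  by (rule the_equality) (use assms poly_eqI_positive_nats in auto)

section \<open>The Ehrhart polynomials of U, T and Sp\<close>

lemma card_dilate_lattice_points_U:
  assumes "k < n" and "1 \<le> t"
  shows "card (dilate_lattice_points n (U_bases k n) t) = num_comps n t (k * t)"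
proof -
  have "card (dilate_lattice_points n (U_bases k n) t)
      = (\<Sum>a\<in>{0..k * t}. num_comps 0 t a * num_comps n t (k * t - a))"
    using assms by (simp add: U_bases_eq_prefix_bases dilate_lattice_points_prefix_bases
        card_prefix_box_points)
  also have "\<dots> = (\<Sum>a\<in>{0}. num_comps 0 t a * num_comps n t (k * t - a))"
    by (rule sum.mono_neutral_right) (auto simp: num_comps_0)
  finally show ?thesis by (simp add: num_comps_0)
qed

lemma card_dilate_lattice_points_T:
  assumes "2 \<le> k" and "k < n" and "1 \<le> t"
  shows "real (card (dilate_lattice_points n (T_bases k n) t))
       = (\<Sum>b\<le>t. poly (binom_poly (k - 1) * binom_poly (n - k - 1)) (real b))"
proof -
  have "card (dilate_lattice_points n (T_bases k n) t)
      = (\<Sum>a\<in>{(k - 1) * t..k * t}. num_comps k t a * num_comps (n - k) t (k * t - a))"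
    using assms by (simp add: T_bases_eq_prefix_bases dilate_lattice_points_prefix_bases
        card_prefix_box_points)
  also have "\<dots> = (\<Sum>b\<le>t. num_comps k t (k * t - b) * num_comps (n - k) t b)"
    using assms le_trans[of _ t "k * t"]
    by (intro sum.reindex_bij_witness[where i = "\<lambda>b. k * t - b" and j = "\<lambda>a. k * t - a"])
      (auto simp: diff_mult_distrib)
  also have "\<dots> = (\<Sum>b\<le>t. num_comps k t b * num_comps (n - k) t b)"
    using num_comps_complement[of _ k t] assms le_trans[of _ t "k * t"] by (intro sum.cong) auto
  finally show ?thesis
    using assms by (simp add: num_comps_le_bound)
qed

lemma num_comps_multiple_swap:
  "k \<le> n \<Longrightarrow> num_comps n t ((n - k) * t) = num_comps n t (k * t)"
  using num_comps_complement[of "k * t" n t] by (simp add: diff_mult_distrib)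

lemma card_dilate_lattice_points_Sp:
  assumes "1 \<le> k" and "k < n" and "1 \<le> t"
  shows "real (card (dilate_lattice_points n (Sp_bases k n) t))
       = real (num_comps n t (k * t)) - (\<Sum>b<t. poly (binom_poly (k - 1) * binom_poly (n - k - 1)) (real b))"
proof -
  define R where "R = (n - k) * t"
  have "t \<le> R" using assms by (simp add: R_def)
  have "num_comps n t (k * t) = num_comps n t R"
    using num_comps_multiple_swap[of k n t] assms by (simp add: R_def)
  also have "\<dots> = (\<Sum>a\<in>{0..R}. num_comps k t a * num_comps (n - k) t (R - a))"
    by (rule num_comps_convolution) (use assms in simp)
  also have "{0..R} = {..<t} \<union> {t..R}" using \<open>t \<le> R\<close> by auto
  also have "(\<Sum>a\<in>{..<t} \<union> {t..R}. num_comps k t a * num_comps (n - k) t (R - a))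
      = (\<Sum>a<t. num_comps k t a * num_comps (n - k) t (R - a))
        + (\<Sum>a\<in>{t..R}. num_comps k t a * num_comps (n - k) t (R - a))"
    by (rule sum.union_disjoint) auto
  also have "(\<Sum>a\<in>{t..R}. num_comps k t a * num_comps (n - k) t (R - a))
      = card (dilate_lattice_points n (Sp_bases k n) t)"
    using assms by (simp add: Sp_bases_eq_prefix_bases R_def
        dilate_lattice_points_prefix_bases card_prefix_box_points)
  also have "(\<Sum>a<t. num_comps k t a * num_comps (n - k) t (R - a))
      = (\<Sum>a<t. num_comps k t a * num_comps (n - k) t a)"
  proof (rule sum.cong[OF refl])
    fix a assume "a \<in> {..<t}"
    then have "a \<le> R" using \<open>t \<le> R\<close> by simp
    then show "num_comps k t a * num_comps (n - k) t (R - a) = num_comps k t a * num_comps (n - k) t a"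
      using num_comps_complement[of a "n - k" t] by (simp add: R_def)
  qed
  finally show ?thesis
    using assms by (simp add: num_comps_le_bound)
qed

theorem lemma6p2:
  fixes k n :: nat
  assumes "2 \<le> k" and "k + 2 \<le> n"
  shows "ehrhart_poly n (Sp_bases k n) = ehrhart_poly n (Sp_bases (n - k) n)
       \<and> ehrhart_poly n (Sp_bases k n) =
         ehrhart_poly n (U_bases k n) - pcompose (ehrhart_poly n (T_bases k n)) [:-1, 1:]"
proof -
  define g where "g = binom_poly (k - 1) * binom_poly (n - k - 1)"
  obtain G where G: "\<forall>s. poly G (real s) = (\<Sum>b\<le>s. poly g (real b))"
    using partial_sums_poly by blast
  have G_shifted: "poly (pcompose G [:-1, 1:]) (real t) = (\<Sum>b<t. poly g (real b))"
    if t: "1 \<le> t" for t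
  proof -
    obtain t' where "t = Suc t'" using t by (cases t) auto
    then show ?thesis using G by (simp add: poly_pcompose lessThan_Suc_atMost)
  qed
  have "ehrhart_poly n (U_bases k n) = hypersimplex_poly n k"
    using assms by (intro ehrhart_poly_eqI) (simp add: card_dilate_lattice_points_U num_comps_multiple)
  moreover have "ehrhart_poly n (T_bases k n) = G"
    using assms by (intro ehrhart_poly_eqI) (simp add: card_dilate_lattice_points_T G g_def)
  moreover have "ehrhart_poly n (Sp_bases k n) = hypersimplex_poly n k - pcompose G [:-1, 1:]"
    using assms by (intro ehrhart_poly_eqI)
      (simp add: card_dilate_lattice_points_Sp num_comps_multiple G_shifted g_def)
  moreover have "ehrhart_poly n (Sp_bases (n - k) n) = hypersimplex_poly n k - pcompose G [:-1, 1:]"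
    using assms by (intro ehrhart_poly_eqI)
      (simp add: card_dilate_lattice_points_Sp num_comps_multiple_swap num_comps_multiple G_shifted
        g_def, simp add: mult.commute)
  ultimately show ?thesis by simp
qed

end
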